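(* Let $Q$ be a quantity space over a field $K$ with a basis $E=\{e_1,\ldots,e_n\}$. Then $\mathsf{E}=\{[e_1],\ldots,[e_n]\}$ is a basis for the abelian group $Q/{\sim}$, and $\mathsf{E}$ has the same cardinality as $E$.
   Context: A scalable monoid over a (unital, associative) ring $R$ is a monoid $X$ (identity $1_X$, product written $xy$) together with a map $R\times X\to X$, $(\alpha,x)\mapsto\alpha\cdot x$, such that $1\cdot x=x$, $\alpha\cdot(\beta\cdot x)=\alpha\beta\cdot x$ and $\alpha\cdot(xy)=(\alpha\cdot x)y=x(\alpha\cdot y)$. A quantity space over a field $K$ is a commutative scalable monoid $Q$ over $K$ for which there exists a finite set $\{e_1,\ldots,e_n\}$ of invertible elements of $Q$ (a basis) such that every $x\in Q$ has a unique expansion $x=\mu\cdot\prod_{i=1}^n e_i^{k_i}$ with $\mu\in K$, $k_i\in\mathbb{Z}$. On $Q$, $x\sim y$ means $\alpha\cdot x=\beta\cdot y$ for some $\alpha,\beta\in K$; $[x]$ is the equivalence class of $x$, and $Q/{\sim}$ is the set of classes with $[x][y]=[xy]$, which is an abelian group. A basis of a finitely generated abelian group $G$ is a set $\{\varepsilon_1,\ldots,\varepsilon_n\}\subseteq G$ such that every $g\in G$ has a unique expansion $g=\prod_{i=1}^n\varepsilon_i^{k_i}$ with $k_i\in\mathbb{Z}$. *)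

theory Defs
  imports "HOL-Algebra.Algebra"
begin

definition scalable_monoid :: "('q, 'b) monoid_scheme \<Rightarrow> ('k::ring_1 \<Rightarrow> 'q \<Rightarrow> 'q) \<Rightarrow> bool" where
  "scalable_monoid Q smul \<longleftrightarrow> monoid Q \<and>
     (\<forall>\<alpha> x. x \<in> carrier Q \<longrightarrow> smul \<alpha> x \<in> carrier Q) \<and>
     (\<forall>x \<in> carrier Q. smul 1 x = x) \<and>
     (\<forall>\<alpha> \<beta>. \<forall>x \<in> carrier Q. smul \<alpha> (smul \<beta> x) = smul (\<alpha> * \<beta>) x) \<and>
     (\<forall>\<alpha>. \<forall>x \<in> carrier Q. \<forall>y \<in> carrier Q.
        smul \<alpha> (x \<otimes>\<^bsub>Q\<^esub> y) = smul \<alpha> x \<otimes>\<^bsub>Q\<^esub> y \<and>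
        smul \<alpha> (x \<otimes>\<^bsub>Q\<^esub> y) = x \<otimes>\<^bsub>Q\<^esub> smul \<alpha> y)"

definition qs_basis :: "('q, 'b) monoid_scheme \<Rightarrow> ('k::field \<Rightarrow> 'q \<Rightarrow> 'q) \<Rightarrow> 'q set \<Rightarrow> bool" where
  "qs_basis Q smul E \<longleftrightarrow> finite E \<and> E \<subseteq> Units Q \<and>
     (\<forall>x \<in> carrier Q. \<exists>!(\<mu>, k). k \<in> E \<rightarrow>\<^sub>E (UNIV :: int set) \<and>
         x = smul \<mu> (finprod Q (\<lambda>e. e [^]\<^bsub>Q\<^esub> (k e :: int)) E))"

definition quantity_space :: "('q, 'b) monoid_scheme \<Rightarrow> ('k::field \<Rightarrow> 'q \<Rightarrow> 'q) \<Rightarrow> bool" where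
  "quantity_space Q smul \<longleftrightarrow> comm_monoid Q \<and> scalable_monoid Q smul \<and> (\<exists>E. qs_basis Q smul E)"

definition qequiv :: "('q, 'b) monoid_scheme \<Rightarrow> ('k::field \<Rightarrow> 'q \<Rightarrow> 'q) \<Rightarrow> 'q \<Rightarrow> 'q \<Rightarrow> bool" where
  "qequiv Q smul x y \<longleftrightarrow> (\<exists>\<alpha> \<beta>. smul \<alpha> x = smul \<beta> y)"

definition qcls :: "('q, 'b) monoid_scheme \<Rightarrow> ('k::field \<Rightarrow> 'q \<Rightarrow> 'q) \<Rightarrow> 'q \<Rightarrow> 'q set" where
  "qcls Q smul x = {y \<in> carrier Q. qequiv Q smul x y}"

definition qquot :: "('q, 'b) monoid_scheme \<Rightarrow> ('k::field \<Rightarrow> 'q \<Rightarrow> 'q) \<Rightarrow> 'q set monoid" where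
  "qquot Q smul = \<lparr> carrier = qcls Q smul ` carrier Q,
     monoid.mult = (\<lambda>A B. qcls Q smul ((SOME x. x \<in> A) \<otimes>\<^bsub>Q\<^esub> (SOME y. y \<in> B))),
     one = qcls Q smul \<one>\<^bsub>Q\<^esub> \<rparr>"

definition group_basis :: "('g, 'b) monoid_scheme \<Rightarrow> 'g set \<Rightarrow> bool" where
  "group_basis G B \<longleftrightarrow> finite B \<and> B \<subseteq> carrier G \<and>
     (\<forall>g \<in> carrier G. \<exists>!k. k \<in> B \<rightarrow>\<^sub>E (UNIV :: int set) \<and>
         g = finprod G (\<lambda>b. b [^]\<^bsub>G\<^esub> (k b :: int)) B)"

end

theory Submission
  imports Defs
begin

text \<open>
  Every quantity x = \<mu> \<cdot> \<Prod> e^k(e) has a well-defined exponent vector k \<in> \<int>^E, which is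
  additive and blind to the scalar \<mu>. Two quantities are equivalent iff their exponent vectors
  agree: if they do, x and y differ only in the scalar, so 0 \<cdot> x = 0 \<cdot> y. Hence
  [x] \<mapsto> (exponent vector of x) is an isomorphism Q/\<sim> \<cong> \<int>^E, whose inverse is
  k \<mapsto> \<Prod> [e]^k(e); it sends [e] to the unit vector at e, so the classes of distinct basis
  elements are distinct and form a basis.
\<close>

lemma bij_betw_restrict_compose_PiE:
  assumes "inj_on f A"
  shows "bij_betw (\<lambda>k. \<lambda>a\<in>A. k (f a)) (f ` A \<rightarrow>\<^sub>E B) (A \<rightarrow>\<^sub>E B)"
proof (rule bij_betwI[where g = "\<lambda>k. \<lambda>b\<in>f ` A. k (inv_into A f b)"])
  show "(\<lambda>k. \<lambda>a\<in>A. k (f a)) \<in> (f ` A \<rightarrow>\<^sub>E B) \<rightarrow> (A \<rightarrow>\<^sub>E B)"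
    by auto
  show "(\<lambda>k. \<lambda>b\<in>f ` A. k (inv_into A f b)) \<in> (A \<rightarrow>\<^sub>E B) \<rightarrow> (f ` A \<rightarrow>\<^sub>E B)"
    by (auto intro!: inv_into_into)
  show "(\<lambda>b\<in>f ` A. (\<lambda>a\<in>A. k (f a)) (inv_into A f b)) = k" if k: "k \<in> f ` A \<rightarrow>\<^sub>E B" for k
  proof
    fix b
    show "(\<lambda>b\<in>f ` A. (\<lambda>a\<in>A. k (f a)) (inv_into A f b)) b = k b"
    proof (cases "b \<in> f ` A")
      case True
      moreover have "inv_into A f b \<in> A"
        using True by (rule inv_into_into)
      ultimately show ?thesis
        by (simp add: f_inv_into_f)
    next
      case False
      then show ?thesis
        using PiE_arb[OF k False] by simp
    qed
  qed
  show "(\<lambda>a\<in>A. (\<lambda>b\<in>f ` A. k (inv_into A f b)) (f a)) = k" if "k \<in> A \<rightarrow>\<^sub>E B" for k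
  proof -
    have "(\<lambda>a\<in>A. (\<lambda>b\<in>f ` A. k (inv_into A f b)) (f a)) = (\<lambda>a\<in>A. k a)"
      using assms by (intro restrict_ext) simp
    also have "\<dots> = k"
      using that by (simp add: PiE_restrict)
    finally show ?thesis .
  qed
qed

lemma bij_betw_imp_ex1_preimage:
  assumes "bij_betw h A B" "b \<in> B"
  shows "\<exists>!a. a \<in> A \<and> b = h a"
  using assms unfolding bij_betw_def inj_on_def by blast

lemma group_basis_imageI:
  fixes G (structure)
  assumes "comm_group G" and fin: "finite E" and inj: "inj_on f E" and f: "f \<in> E \<rightarrow> carrier G"
    and bij: "bij_betw (\<lambda>k. \<Otimes>\<^bsub>G\<^esub>e\<in>E. f e [^]\<^bsub>G\<^esub> (k e :: int)) (E \<rightarrow>\<^sub>E UNIV) (carrier G)"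
  shows "group_basis G (f ` E)"
proof -
  interpret comm_group G by fact
  have reindex: "(\<Otimes>b\<in>f ` E. b [^] (k b :: int)) = (\<Otimes>e\<in>E. f e [^] (\<lambda>a\<in>E. k (f a)) e)" for k
  proof -
    have "(\<lambda>b. b [^] k b) \<in> f ` E \<rightarrow> carrier G"
      using f by auto
    then have "(\<Otimes>b\<in>f ` E. b [^] (k b :: int)) = (\<Otimes>e\<in>E. f e [^] k (f e))"
      by (rule finprod_reindex[OF _ inj])
    also have "\<dots> = (\<Otimes>e\<in>E. f e [^] (\<lambda>a\<in>E. k (f a)) e)"
      by (rule finprod_cong') (use f in auto)
    finally show ?thesis .
  qed
  have "bij_betw ((\<lambda>k. \<Otimes>e\<in>E. f e [^] (k e :: int)) \<circ> (\<lambda>k. \<lambda>a\<in>E. k (f a)))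
      (f ` E \<rightarrow>\<^sub>E UNIV) (carrier G)"
    using bij_betw_trans[OF bij_betw_restrict_compose_PiE[OF inj] bij] .
  then have "bij_betw (\<lambda>k. \<Otimes>b\<in>f ` E. b [^] (k b :: int)) (f ` E \<rightarrow>\<^sub>E UNIV) (carrier G)"
    by (simp add: reindex comp_def)
  then have "\<exists>!k. k \<in> f ` E \<rightarrow>\<^sub>E UNIV \<and> g = (\<Otimes>b\<in>f ` E. b [^] (k b :: int))"
    if "g \<in> carrier G" for g
    using that by (rule bij_betw_imp_ex1_preimage)
  moreover have "f ` E \<subseteq> carrier G"
    using f by auto
  ultimately show ?thesis
    using fin unfolding group_basis_def by blast
qed

lemma units_of_int_pow:
  assumes "monoid G" "x \<in> Units G"
  shows "x [^]\<^bsub>units_of G\<^esub> (i::int) = x [^]\<^bsub>G\<^esub> i"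
proof -
  interpret monoid G by fact
  have "x [^]\<^bsub>units_of G\<^esub> n \<in> Units G" for n :: nat
    using monoid.nat_pow_closed[OF group.is_monoid[OF units_group]] assms(2)
    by (simp add: units_of_carrier)
  then show ?thesis
    using assms(2) by (simp add: int_pow_def2 units_of_pow units_of_inv del: pow_nat)
qed

lemma hom_int_pow_Units:
  assumes "monoid G" "group H" "h \<in> hom G H" "x \<in> Units G"
  shows "h (x [^]\<^bsub>G\<^esub> (i::int)) = h x [^]\<^bsub>H\<^esub> i"
proof -
  have "h \<in> hom (units_of G) H"
    using assms(3) by (auto simp: hom_def units_of_carrier units_of_mult Units_def)
  then show ?thesis
    using hom_int_pow[of h "units_of G" H x i] assms
    by (simp add: monoid.units_group units_of_carrier units_of_int_pow)
qed

lemma hom_finprod: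
  assumes "comm_monoid G" "comm_group H" "h \<in> hom G H" "finite A" "f \<in> A \<rightarrow> carrier G"
  shows "h (finprod G f A) = finprod H (h \<circ> f) A"
proof -
  interpret G: comm_monoid G by fact
  interpret H: comm_group H by fact
  have "h \<one>\<^bsub>G\<^esub> \<otimes>\<^bsub>H\<^esub> h \<one>\<^bsub>G\<^esub> = h \<one>\<^bsub>G\<^esub>"
    using hom_mult[OF assms(3)] by (metis G.one_closed G.l_one)
  then have one: "h \<one>\<^bsub>G\<^esub> = \<one>\<^bsub>H\<^esub>"
    using hom_in_carrier[OF assms(3) G.one_closed] by (metis H.l_cancel_one')
  show ?thesis
    using assms(4,5)
  proof (induction A rule: finite_induct)
    case (insert a A)
    then show ?case
      using assms(3) by (simp add: hom_mult Pi_iff hom_in_carrier comp_def)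
  qed (simp add: one)
qed

locale quantity_space_basis = comm_monoid Q for Q :: "'q monoid" (structure) +
  fixes smul :: "'k::field \<Rightarrow> 'q \<Rightarrow> 'q" and E :: "'q set"
  assumes scalable: "scalable_monoid Q smul" and basis: "qs_basis Q smul E"
begin

abbreviation cls :: "'q \<Rightarrow> 'q set" where "cls \<equiv> qcls Q smul"
abbreviation Qsim :: "'q set monoid" where "Qsim \<equiv> qquot Q smul"

lemma smul_closed: "x \<in> carrier Q \<Longrightarrow> smul a x \<in> carrier Q"
  using scalable by (simp add: scalable_monoid_def)

lemma smul_one: "x \<in> carrier Q \<Longrightarrow> smul 1 x = x"
  using scalable by (simp add: scalable_monoid_def)

lemma smul_smul: "x \<in> carrier Q \<Longrightarrow> smul a (smul b x) = smul (a * b) x"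
  using scalable by (simp add: scalable_monoid_def)

lemma smul_mult_left: "x \<in> carrier Q \<Longrightarrow> y \<in> carrier Q \<Longrightarrow> smul a (x \<otimes> y) = smul a x \<otimes> y"
  using scalable by (simp add: scalable_monoid_def)

lemma smul_mult_right: "x \<in> carrier Q \<Longrightarrow> y \<in> carrier Q \<Longrightarrow> smul a (x \<otimes> y) = x \<otimes> smul a y"
  using scalable unfolding scalable_monoid_def by blast

lemma smul_mult_smul:
  assumes "x \<in> carrier Q" "y \<in> carrier Q"
  shows "smul a x \<otimes> smul b y = smul (a * b) (x \<otimes> y)"
  using assms by (simp add: smul_mult_right[symmetric] smul_closed smul_mult_left smul_smul mult.commute)

lemma finite_basis: "finite E"
  using basis by (simp add: qs_basis_def)

lemma basis_Units: "E \<subseteq> Units Q"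
  using basis by (simp add: qs_basis_def)

lemma basis_closed: "E \<subseteq> carrier Q"
  using basis_Units by (auto simp: Units_def)

interpretation U: comm_group "units_of Q"
  by (rule units_comm_group)

lemma Units_int_pow_closed: "u \<in> Units Q \<Longrightarrow> u [^] (i::int) \<in> Units Q"
  using U.int_pow_closed[of u i] by (simp add: units_of_carrier units_of_int_pow[OF monoid_axioms])

lemma Units_int_pow_mult: "u \<in> Units Q \<Longrightarrow> u [^] (i::int) \<otimes> u [^] j = u [^] (i + j)"
  using U.int_pow_mult[of u i j] by (simp add: units_of_carrier units_of_mult units_of_int_pow[OF monoid_axioms])

lemma Units_int_pow_1: "u \<in> Units Q \<Longrightarrow> u [^] (1::int) = u"
  using U.int_pow_1[of u] by (simp add: units_of_carrier units_of_int_pow[OF monoid_axioms])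

definition monomial :: "('q \<Rightarrow> int) \<Rightarrow> 'q" where
  "monomial k = (\<Otimes>e\<in>E. e [^] k e)"

lemma basis_powers_closed: "(\<lambda>e. e [^] (k e :: int)) \<in> E \<rightarrow> carrier Q"
  using Units_int_pow_closed basis_Units by blast

lemma monomial_closed: "monomial k \<in> carrier Q"
  unfolding monomial_def using basis_powers_closed by simp

lemma monomial_cong: "(\<And>e. e \<in> E \<Longrightarrow> k e = l e) \<Longrightarrow> monomial k = monomial l"
  unfolding monomial_def by (rule finprod_cong') (use basis_powers_closed in auto)

lemma monomial_restrict: "monomial (\<lambda>e\<in>E. k e) = monomial k"
  by (rule monomial_cong) simp

lemma monomial_mult: "monomial k \<otimes> monomial l = monomial (\<lambda>e. k e + l e)"
proof -
  have "monomial k \<otimes> monomial l = (\<Otimes>e\<in>E. e [^] k e \<otimes> e [^] l e)"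
    unfolding monomial_def using basis_powers_closed by simp
  also have "\<dots> = monomial (\<lambda>e. k e + l e)"
    unfolding monomial_def
    by (rule finprod_cong') (use basis_powers_closed Units_int_pow_mult basis_Units in auto)
  finally show ?thesis .
qed

lemma monomial_zero: "monomial (\<lambda>e. 0) = \<one>"
  unfolding monomial_def by simp

lemma monomial_single:
  assumes "e \<in> E"
  shows "monomial (\<lambda>x. if x = e then 1 else 0) = e"
proof -
  have "monomial (\<lambda>x. if x = e then 1 else 0) = (\<Otimes>x\<in>E. if e = x then x else \<one>)"
    unfolding monomial_def
    by (rule finprod_cong') (use basis_closed basis_Units Units_int_pow_1 in auto)
  also have "\<dots> = e"
    using finprod_singleton[of e E "\<lambda>x. x"] assms finite_basis basis_closed by auto
  finally show ?thesis .
qed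

lemma unique_expansion:
  "x \<in> carrier Q \<Longrightarrow> \<exists>!(\<mu>, k). k \<in> E \<rightarrow>\<^sub>E UNIV \<and> x = smul \<mu> (monomial k)"
  using basis unfolding qs_basis_def monomial_def by blast

lemma smul_monomial_eq_imp_eq:
  assumes "k \<in> E \<rightarrow>\<^sub>E UNIV" "l \<in> E \<rightarrow>\<^sub>E UNIV" "smul \<mu> (monomial k) = smul \<nu> (monomial l)"
  shows "k = l"
proof -
  have "smul \<mu> (monomial k) \<in> carrier Q"
    by (simp add: smul_closed monomial_closed)
  then obtain p where p: "\<And>q. (case q of (\<mu>', k') \<Rightarrow> k' \<in> E \<rightarrow>\<^sub>E UNIV \<and>
      smul \<mu> (monomial k) = smul \<mu>' (monomial k')) \<Longrightarrow> q = p"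
    using unique_expansion unfolding Ex1_def by blast
  have "(\<mu>, k) = p"
    by (rule p) (simp add: assms)
  moreover have "(\<nu>, l) = p"
    by (rule p) (simp add: assms)
  ultimately have "(\<mu>, k) = (\<nu>, l)"
    by (rule trans[OF _ sym])
  then show ?thesis
    by simp
qed

definition exponents :: "'q \<Rightarrow> 'q \<Rightarrow> int" where
  "exponents x = (SOME k. k \<in> E \<rightarrow>\<^sub>E UNIV \<and> (\<exists>\<mu>. x = smul \<mu> (monomial k)))"

lemma exponents_expansion:
  assumes "x \<in> carrier Q"
  shows "exponents x \<in> E \<rightarrow>\<^sub>E UNIV" "\<exists>\<mu>. x = smul \<mu> (monomial (exponents x))"
proof -
  have "\<exists>k. k \<in> E \<rightarrow>\<^sub>E UNIV \<and> (\<exists>\<mu>. x = smul \<mu> (monomial k))"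
    using unique_expansion[OF assms] by auto
  then have "exponents x \<in> E \<rightarrow>\<^sub>E UNIV \<and> (\<exists>\<mu>. x = smul \<mu> (monomial (exponents x)))"
    unfolding exponents_def by (rule someI_ex)
  then show "exponents x \<in> E \<rightarrow>\<^sub>E UNIV" "\<exists>\<mu>. x = smul \<mu> (monomial (exponents x))"
    by auto
qed

lemma exponents_smul_monomial:
  assumes "k \<in> E \<rightarrow>\<^sub>E UNIV"
  shows "exponents (smul \<mu> (monomial k)) = k"
proof -
  have x: "smul \<mu> (monomial k) \<in> carrier Q"
    by (simp add: smul_closed monomial_closed)
  obtain \<nu> where "smul \<mu> (monomial k) = smul \<nu> (monomial (exponents (smul \<mu> (monomial k))))"
    using exponents_expansion(2)[OF x] by blast
  then have "k = exponents (smul \<mu> (monomial k))"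
    by (rule smul_monomial_eq_imp_eq[OF assms exponents_expansion(1)[OF x]])
  then show ?thesis
    by simp
qed

lemma exponents_monomial: "exponents (monomial k) = (\<lambda>e\<in>E. k e)"
  using exponents_smul_monomial[of "\<lambda>e\<in>E. k e" 1]
  by (simp add: monomial_restrict smul_one monomial_closed)

lemma exponents_smul:
  assumes "x \<in> carrier Q"
  shows "exponents (smul a x) = exponents x"
proof -
  obtain \<mu> where "x = smul \<mu> (monomial (exponents x))"
    using exponents_expansion(2)[OF assms] by blast
  then have "smul a x = smul (a * \<mu>) (monomial (exponents x))"
    by (metis smul_smul monomial_closed)
  then show ?thesis
    by (simp add: exponents_smul_monomial exponents_expansion(1)[OF assms])
qed

lemma exponents_mult:
  assumes "x \<in> carrier Q" "y \<in> carrier Q"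
  shows "exponents (x \<otimes> y) = (\<lambda>e\<in>E. exponents x e + exponents y e)"
proof -
  obtain \<mu> \<nu> where "x = smul \<mu> (monomial (exponents x))" "y = smul \<nu> (monomial (exponents y))"
    using exponents_expansion(2) assms by blast
  then have "x \<otimes> y = smul (\<mu> * \<nu>) (monomial (\<lambda>e\<in>E. exponents x e + exponents y e))"
    by (metis smul_mult_smul monomial_closed monomial_mult monomial_restrict)
  then show ?thesis
    by (simp add: exponents_smul_monomial)
qed

lemma qequiv_iff_exponents_eq:
  assumes x: "x \<in> carrier Q" and y: "y \<in> carrier Q"
  shows "qequiv Q smul x y \<longleftrightarrow> exponents x = exponents y"
proof
  assume "qequiv Q smul x y"
  then show "exponents x = exponents y"
    unfolding qequiv_def using exponents_smul x y by metis
next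
  assume eq: "exponents x = exponents y"
  have "smul 0 z = smul 0 (monomial (exponents z))" if "z \<in> carrier Q" for z
    using exponents_expansion(2)[OF that] by (metis smul_smul monomial_closed mult_zero_left)
  then have "smul 0 x = smul 0 y"
    using x y eq by metis
  then show "qequiv Q smul x y"
    unfolding qequiv_def by blast
qed

lemma qcls_eq_exponents: "x \<in> carrier Q \<Longrightarrow> cls x = {y \<in> carrier Q. exponents y = exponents x}"
  unfolding qcls_def using qequiv_iff_exponents_eq by auto

lemma qcls_eq_iff:
  assumes "x \<in> carrier Q" "y \<in> carrier Q"
  shows "cls x = cls y \<longleftrightarrow> exponents x = exponents y"
  using assms by (auto simp: qcls_eq_exponents)

lemma carrier_qquot: "carrier Qsim = cls ` carrier Q"
  by (simp add: qquot_def)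

lemma one_qquot: "\<one>\<^bsub>Qsim\<^esub> = cls \<one>"
  by (simp add: qquot_def)

lemma qcls_closed: "x \<in> carrier Q \<Longrightarrow> cls x \<in> carrier Qsim"
  by (simp add: carrier_qquot)

lemma mult_qquot:
  assumes x: "x \<in> carrier Q" and y: "y \<in> carrier Q"
  shows "cls x \<otimes>\<^bsub>Qsim\<^esub> cls y = cls (x \<otimes> y)"
proof -
  define a where "a = (SOME a. a \<in> cls x)"
  define b where "b = (SOME b. b \<in> cls y)"
  have "a \<in> cls x"
    unfolding a_def by (rule someI[of _ x]) (simp add: qcls_eq_exponents x)
  moreover have "b \<in> cls y"
    unfolding b_def by (rule someI[of _ y]) (simp add: qcls_eq_exponents y)
  ultimately have "a \<in> carrier Q" "exponents a = exponents x" "b \<in> carrier Q" "exponents b = exponents y"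
    by (auto simp: qcls_eq_exponents x y)
  then have "cls (a \<otimes> b) = cls (x \<otimes> y)"
    using x y by (simp add: qcls_eq_iff exponents_mult)
  then show ?thesis
    unfolding qquot_def a_def b_def by simp
qed

lemma qcls_hom: "cls \<in> hom Q Qsim"
  by (auto simp: hom_def qcls_closed mult_qquot)

lemma comm_group_qquot: "comm_group Qsim"
proof (rule comm_groupI)
  fix A assume "A \<in> carrier Qsim"
  then obtain x where x: "x \<in> carrier Q" and A: "A = cls x"
    by (auto simp: carrier_qquot)
  have "exponents (monomial (\<lambda>e. - exponents x e) \<otimes> x) = exponents \<one>"
    using x by (simp add: exponents_mult monomial_closed exponents_monomial cong: restrict_cong
        flip: monomial_zero)
  then have "cls (monomial (\<lambda>e. - exponents x e)) \<otimes>\<^bsub>Qsim\<^esub> A = \<one>\<^bsub>Qsim\<^esub>"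
    using x by (simp add: A mult_qquot monomial_closed one_qquot qcls_eq_iff)
  then show "\<exists>B\<in>carrier Qsim. B \<otimes>\<^bsub>Qsim\<^esub> A = \<one>\<^bsub>Qsim\<^esub>"
    using qcls_closed[OF monomial_closed] by blast
qed (auto simp: carrier_qquot one_qquot mult_qquot m_ac)

interpretation Qsim: comm_group Qsim
  by (rule comm_group_qquot)

lemma qcls_monomial: "cls (monomial k) = (\<Otimes>\<^bsub>Qsim\<^esub>e\<in>E. cls e [^]\<^bsub>Qsim\<^esub> k e)"
proof -
  have "cls (monomial k) = (\<Otimes>\<^bsub>Qsim\<^esub>e\<in>E. cls (e [^] k e))"
    unfolding monomial_def
    using hom_finprod[OF comm_monoid_axioms comm_group_qquot qcls_hom finite_basis basis_powers_closed]
    by (simp add: comp_def)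
  also have "\<dots> = (\<Otimes>\<^bsub>Qsim\<^esub>e\<in>E. cls e [^]\<^bsub>Qsim\<^esub> k e)"
  proof (rule Qsim.finprod_cong')
    show "(\<lambda>e. cls e [^]\<^bsub>Qsim\<^esub> k e) \<in> E \<rightarrow> carrier Qsim"
      using basis_closed qcls_closed by auto
    show "cls (e [^] k e) = cls e [^]\<^bsub>Qsim\<^esub> k e" if "e \<in> E" for e
      using that basis_Units hom_int_pow_Units[OF monoid_axioms Qsim.is_group qcls_hom] by blast
  qed simp
  finally show ?thesis .
qed

lemma bij_betw_qcls_monomial: "bij_betw (\<lambda>k. cls (monomial k)) (E \<rightarrow>\<^sub>E UNIV) (carrier Qsim)"
proof (rule bij_betw_imageI)
  show "inj_on (\<lambda>k. cls (monomial k)) (E \<rightarrow>\<^sub>E UNIV)"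
  proof (rule inj_onI)
    fix k l :: "'q \<Rightarrow> int"
    assume "k \<in> E \<rightarrow>\<^sub>E UNIV" "l \<in> E \<rightarrow>\<^sub>E UNIV" "cls (monomial k) = cls (monomial l)"
    then show "k = l"
      by (simp add: qcls_eq_iff monomial_closed exponents_monomial PiE_restrict)
  qed
  show "(\<lambda>k. cls (monomial k)) ` (E \<rightarrow>\<^sub>E UNIV) = carrier Qsim"
  proof
    show "(\<lambda>k. cls (monomial k)) ` (E \<rightarrow>\<^sub>E UNIV) \<subseteq> carrier Qsim"
      using qcls_closed[OF monomial_closed] by blast
    show "carrier Qsim \<subseteq> (\<lambda>k. cls (monomial k)) ` (E \<rightarrow>\<^sub>E UNIV)"
    proof
      fix A assume "A \<in> carrier Qsim"
      then obtain x where x: "x \<in> carrier Q" and A: "A = cls x"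
        by (auto simp: carrier_qquot)
      have "cls x = cls (monomial (exponents x))"
        using x exponents_expansion(1)[OF x]
        by (simp add: qcls_eq_iff monomial_closed exponents_monomial PiE_restrict)
      then show "A \<in> (\<lambda>k. cls (monomial k)) ` (E \<rightarrow>\<^sub>E UNIV)"
        using A exponents_expansion(1)[OF x] by blast
    qed
  qed
qed

lemma exponents_basis: "e \<in> E \<Longrightarrow> exponents e = (\<lambda>x\<in>E. if x = e then 1 else 0)"
  using exponents_monomial[of "\<lambda>x. if x = e then 1 else 0"] by (simp add: monomial_single)

lemma inj_on_qcls_basis: "inj_on cls E"
proof (rule inj_onI)
  fix e e' assume e: "e \<in> E" and e': "e' \<in> E" and "cls e = cls e'"
  then have "exponents e e = exponents e' e"
    using basis_closed by (simp add: qcls_eq_iff subset_iff)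
  then show "e = e'"
    using e e' by (simp add: exponents_basis split: if_splits)
qed

lemma group_basis_qcls_basis: "group_basis Qsim (cls ` E)"
proof (rule group_basis_imageI[OF comm_group_qquot finite_basis inj_on_qcls_basis])
  show "cls \<in> E \<rightarrow> carrier Qsim"
    using basis_closed qcls_closed by blast
  show "bij_betw (\<lambda>k. \<Otimes>\<^bsub>Qsim\<^esub>e\<in>E. cls e [^]\<^bsub>Qsim\<^esub> (k e :: int)) (E \<rightarrow>\<^sub>E UNIV) (carrier Qsim)"
    using bij_betw_qcls_monomial by (simp add: qcls_monomial)
qed

end

theorem proposition3p19:
  fixes Q :: "'q monoid" and smul :: "'k::field \<Rightarrow> 'q \<Rightarrow> 'q" and E :: "'q set"
  assumes "quantity_space Q smul"
    and "qs_basis Q smul E"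
  shows "group_basis (qquot Q smul) (qcls Q smul ` E) \<and> card (qcls Q smul ` E) = card E"
proof -
  interpret quantity_space_basis Q smul E
    using assms unfolding quantity_space_def quantity_space_basis_def quantity_space_basis_axioms_def
    by blast
  show ?thesis
    using group_basis_qcls_basis card_image[OF inj_on_qcls_basis] by simp
qed

end
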